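(* Given a requirement with an $\mathbf{exist}$ $count\_exp$ operation, the minimal counting information of a node $u$ in the DVNet is $\min(\mathbf{c}_u)$ if $count\_exp$ is $\geq N$ or $> N$; it is $\max(\mathbf{c}_u)$ if $count\_exp$ is $\leq N$ or $< N$; and it is the first $\min(|\mathbf{c}_u|, 2)$ smallest elements in $\mathbf{c}_u$ if $count\_exp$ is $== N$.
   Context: A DVNet is a directed acyclic graph, obtained by multiplying the finite automaton of a regular expression $path\_exp$ (over device identifiers) with the network topology, that compactly represents all paths in the network matching $path\_exp$; each DVNet node $u$ corresponds to a device $u.dev$. For a packet $p$, each node $u$ computes a set $\mathbf{c}_u$ of non-negative integers: the distinct numbers, across $p$'s universes (possible sets of packet traces due to ANY-type forwarding actions), of copies of $p$ that can be delivered from $u$ to the destination node along DVNet paths by the network data plane. A destination node has count set $\{1\}$. If $u.dev$ forwards $p$ with an ALL-type action (copy to every next-hop in the group), $\mathbf{c}_u$ is the cross-product sum $\{a+b \mid a\in\mathbf{c}_1, b\in\mathbf{c}_2\}$ (iterated) of the count sets of the downstream neighbors $v_j$ of $u$ whose devices are among the next-hops; if the action is ANY-type (one of the next-hops), $\mathbf{c}_u$ is the union of those sets, additionally including $0$ if $u.dev$ may forward $p$ to a device with no corresponding downstream DVNet node. A requirement with operator $\mathbf{exist}$ $count\_exp$ (where $count\_exp$ is one of $== N$, $\geq N$, $> N$, $\leq N$, $< N$) requires that in every universe the number of traces of $p$ matching $path\_exp$ satisfies $count\_exp$. The minimal counting information of $u$ is defined as the minimal set of elements of $\mathbf{c}_u$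 that $u.dev$ needs to send to the devices of $u$'s upstream neighbors so that the source node of the DVNet can correctly verify the requirement, assuming arbitrary data planes at devices. *)

theory Defs
  imports Main
begin

datatype count_op = CEq | CGe | CGt | CLe | CLt

fun count_sat :: "count_op \<Rightarrow> nat \<Rightarrow> nat \<Rightarrow> bool" where
  "count_sat CEq N k = (k = N)"
| "count_sat CGe N k = (k \<ge> N)"
| "count_sat CGt N k = (k > N)"
| "count_sat CLe N k = (k \<le> N)"
| "count_sat CLt N k = (k < N)"

definition cross_sum :: "nat set \<Rightarrow> nat set \<Rightarrow> nat set" where
  "cross_sum A B = {a + b | a b. a \<in> A \<and> b \<in> B}"

(* An upstream context: how the count set of the source node is computed from the
   count set of u (the Hole, possibly occurring several times, since the DVNet is a DAG)
   and arbitrary count sets of other nodes (Const), via ALL-type cross-product sums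
   and ANY-type unions (union with {0} models the extra 0). *)
datatype ctx = Hole | Const "nat set" | CSum ctx ctx | CUnion ctx ctx

fun ctx_eval :: "ctx \<Rightarrow> nat set \<Rightarrow> nat set" where
  "ctx_eval Hole X = X"
| "ctx_eval (Const S) X = S"
| "ctx_eval (CSum e1 e2) X = cross_sum (ctx_eval e1 X) (ctx_eval e2 X)"
| "ctx_eval (CUnion e1 e2) X = ctx_eval e1 X \<union> ctx_eval e2 X"

(* arbitrary data planes: other count sets are arbitrary finite nonempty sets *)
fun ctx_wf :: "ctx \<Rightarrow> bool" where
  "ctx_wf Hole = True"
| "ctx_wf (Const S) = (finite S \<and> S \<noteq> {})"
| "ctx_wf (CSum e1 e2) = (ctx_wf e1 \<and> ctx_wf e2)"
| "ctx_wf (CUnion e1 e2) = (ctx_wf e1 \<and> ctx_wf e2)"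

definition verifies :: "count_op \<Rightarrow> nat \<Rightarrow> nat set \<Rightarrow> bool" where
  "verifies op N C = (\<forall>k\<in>C. count_sat op N k)"

(* sending T (instead of c) lets the source verify correctly, for arbitrary data planes
   elsewhere (and the bound N of the given operator arbitrary) *)
definition sufficient_info :: "count_op \<Rightarrow> nat set \<Rightarrow> nat set \<Rightarrow> bool" where
  "sufficient_info op c T =
     (\<forall>N e. ctx_wf e \<longrightarrow> (verifies op N (ctx_eval e T) = verifies op N (ctx_eval e c)))"

definition minimal_info :: "count_op \<Rightarrow> nat set \<Rightarrow> nat set \<Rightarrow> bool" where
  "minimal_info op c T =
     (T \<subseteq> c \<and> sufficient_info op c T \<and>
      (\<forall>T'. T' \<subseteq> c \<longrightarrow> sufficient_info op c T' \<longrightarrow> card T \<le> card T'))"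

definition smallest :: "nat \<Rightarrow> nat set \<Rightarrow> nat set" where
  "smallest k c = set (take k (sorted_list_of_set c))"

end

theory Submission
  imports Defs
begin

(* The minimum of a cross sum is the sum of the minima and the minimum of a union is the
   minimum of the minima, so the minimum of the source's count set depends on u only through
   Min c_u; a requirement >= N or > N is decided by that minimum alone.  Dually for Max.
   A requirement == N holds exactly when the count set lies inside {N}; an upstream context
   either ignores u altogether or maps two distinct counts of u to two distinct counts at the
   source, so any two elements of c_u carry all the information, while one element cannot
   (the source may be u itself).  Sending nothing is never sufficient, since the empty set
   verifies every requirement. *)

lemma cross_sum_eq_image: "cross_sum A B = (\<lambda>(a, b). a + b) ` (A \<times> B)"
  by (auto simp: cross_sum_def)

lemma cross_sum_commute: "cross_sum A B = cross_sum B A"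
  unfolding cross_sum_def by (blast intro: add.commute)

lemma finite_cross_sum: "finite A \<Longrightarrow> finite B \<Longrightarrow> finite (cross_sum A B)"
  by (simp add: cross_sum_eq_image)

lemma cross_sum_empty_iff: "cross_sum A B = {} \<longleftrightarrow> A = {} \<or> B = {}"
  by (auto simp: cross_sum_eq_image)

lemma Min_cross_sum:
  fixes A B :: "nat set"
  assumes "finite A" "finite B" "A \<noteq> {}" "B \<noteq> {}"
  shows "Min (cross_sum A B) = Min A + Min B"
proof (rule Min_eqI)
  show "finite (cross_sum A B)" using assms by (simp add: finite_cross_sum)
  show "Min A + Min B \<in> cross_sum A B"
    using Min_in[OF assms(1,3)] Min_in[OF assms(2,4)] unfolding cross_sum_def by blast
  show "Min A + Min B \<le> y" if "y \<in> cross_sum A B" for y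
    using that assms by (auto simp: cross_sum_def intro: add_mono)
qed

lemma Max_cross_sum:
  fixes A B :: "nat set"
  assumes "finite A" "finite B" "A \<noteq> {}" "B \<noteq> {}"
  shows "Max (cross_sum A B) = Max A + Max B"
proof (rule Max_eqI)
  show "finite (cross_sum A B)" using assms by (simp add: finite_cross_sum)
  show "Max A + Max B \<in> cross_sum A B"
    using Max_in[OF assms(1,3)] Max_in[OF assms(2,4)] unfolding cross_sum_def by blast
  show "y \<le> Max A + Max B" if "y \<in> cross_sum A B" for y
    using that assms by (auto simp: cross_sum_def intro: add_mono)
qed

lemma cross_sum_not_subset_singleton:
  assumes "B \<noteq> {}" and "\<nexists>k. A \<subseteq> {k}"
  shows "\<nexists>k. cross_sum A B \<subseteq> {k}"
proof
  assume "\<exists>k. cross_sum A B \<subseteq> {k}"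
  then obtain k where k: "cross_sum A B \<subseteq> {k}" ..
  obtain b where "b \<in> B" using assms(1) by blast
  then have "a + b = k" if "a \<in> A" for a
    using k that by (auto simp: cross_sum_def)
  then have "A \<subseteq> {k - b}" by force
  with assms(2) show False by blast
qed

lemma ctx_eval_mono: "X \<subseteq> Y \<Longrightarrow> ctx_eval e X \<subseteq> ctx_eval e Y"
  by (induction e) (auto simp: cross_sum_def)

lemma finite_ctx_eval: "ctx_wf e \<Longrightarrow> finite X \<Longrightarrow> finite (ctx_eval e X)"
  by (induction e) (auto simp: finite_cross_sum)

lemma ctx_eval_nonempty: "ctx_wf e \<Longrightarrow> X \<noteq> {} \<Longrightarrow> ctx_eval e X \<noteq> {}"
  by (induction e) (auto simp: cross_sum_empty_iff)

lemma Min_ctx_eval_Min: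
  assumes "ctx_wf e" "finite X" "X \<noteq> {}"
  shows "Min (ctx_eval e {Min X}) = Min (ctx_eval e X)"
  using assms
proof (induction e)
  case (CSum e1 e2)
  then show ?case
    by (simp add: Min_cross_sum finite_ctx_eval ctx_eval_nonempty)
next
  case (CUnion e1 e2)
  then show ?case
    by (simp add: Min_Un finite_ctx_eval ctx_eval_nonempty)
qed auto

lemma Max_ctx_eval_Max:
  assumes "ctx_wf e" "finite X" "X \<noteq> {}"
  shows "Max (ctx_eval e {Max X}) = Max (ctx_eval e X)"
  using assms
proof (induction e)
  case (CSum e1 e2)
  then show ?case
    by (simp add: Max_cross_sum finite_ctx_eval ctx_eval_nonempty)
next
  case (CUnion e1 e2)
  then show ?case
    by (simp add: Max_Un finite_ctx_eval ctx_eval_nonempty)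
qed auto

lemma ctx_eval_constant_or_not_subset_singleton:
  assumes "ctx_wf e" and "\<nexists>k. X \<subseteq> {k}"
  shows "ctx_eval e X = ctx_eval e Y \<or> (\<nexists>k. ctx_eval e X \<subseteq> {k})"
  using assms(1)
proof (induction e)
  case (CSum e1 e2)
  have "X \<noteq> {}" using assms(2) by blast
  then have ne: "ctx_eval e1 X \<noteq> {}" "ctx_eval e2 X \<noteq> {}"
    using CSum.prems by (simp_all add: ctx_eval_nonempty)
  consider "ctx_eval e1 X = ctx_eval e1 Y" "ctx_eval e2 X = ctx_eval e2 Y"
    | "\<nexists>k. ctx_eval e1 X \<subseteq> {k}" | "\<nexists>k. ctx_eval e2 X \<subseteq> {k}"
    using CSum by auto
  then show ?case
  proof cases
    case 2
    then show ?thesis using ne(2) by (simp add: cross_sum_not_subset_singleton)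
  next
    case 3
    then have "\<nexists>k. cross_sum (ctx_eval e1 X) (ctx_eval e2 X) \<subseteq> {k}"
      using cross_sum_not_subset_singleton[OF ne(1)] by (subst cross_sum_commute)
    then show ?thesis by simp
  qed simp
qed (use assms(2) in auto)

lemma verifies_CEq_iff: "verifies CEq N C \<longleftrightarrow> C \<subseteq> {N}"
  by (auto simp: verifies_def)

lemma verifies_iff_Min:
  assumes "op \<in> {CGe, CGt}" "finite C" "C \<noteq> {}"
  shows "verifies op N C \<longleftrightarrow> count_sat op N (Min C)"
  using assms by (cases op) (simp_all add: verifies_def Min_ge_iff Min_gr_iff)

lemma verifies_iff_Max:
  assumes "op \<in> {CLe, CLt}" "finite C" "C \<noteq> {}"
  shows "verifies op N C \<longleftrightarrow> count_sat op N (Max C)"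
  using assms by (cases op) (simp_all add: verifies_def Max_le_iff Max_less_iff)

lemma sufficient_info_refl: "sufficient_info op c c"
  by (simp add: sufficient_info_def)

lemma sufficient_info_Min:
  assumes "op \<in> {CGe, CGt}" "finite c" "c \<noteq> {}"
  shows "sufficient_info op c {Min c}"
  unfolding sufficient_info_def
proof (intro allI impI)
  fix N e assume "ctx_wf e"
  with assms show "verifies op N (ctx_eval e {Min c}) = verifies op N (ctx_eval e c)"
    by (simp add: verifies_iff_Min Min_ctx_eval_Min finite_ctx_eval ctx_eval_nonempty)
qed

lemma sufficient_info_Max:
  assumes "op \<in> {CLe, CLt}" "finite c" "c \<noteq> {}"
  shows "sufficient_info op c {Max c}"
  unfolding sufficient_info_def
proof (intro allI impI)
  fix N e assume "ctx_wf e"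
  with assms show "verifies op N (ctx_eval e {Max c}) = verifies op N (ctx_eval e c)"
    by (simp add: verifies_iff_Max Max_ctx_eval_Max finite_ctx_eval ctx_eval_nonempty)
qed

lemma sufficient_info_CEq:
  assumes "T \<subseteq> c" and "\<nexists>k. T \<subseteq> {k}"
  shows "sufficient_info CEq c T"
  unfolding sufficient_info_def
proof (intro allI impI)
  fix N e assume "ctx_wf e"
  have "ctx_eval e T \<subseteq> ctx_eval e c" using assms(1) by (rule ctx_eval_mono)
  then show "verifies CEq N (ctx_eval e T) = verifies CEq N (ctx_eval e c)"
    using ctx_eval_constant_or_not_subset_singleton[OF \<open>ctx_wf e\<close> assms(2), of c]
    by (auto simp: verifies_CEq_iff)
qed

lemma count_sat_fails_above_0: "\<exists>N. \<not> count_sat op N (Suc k)"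
  by (cases op) (auto intro: exI[of _ 0] exI[of _ "Suc (Suc k)"])

lemma sufficient_info_nonempty:
  assumes "sufficient_info op c T" and "c \<noteq> {}"
  shows "T \<noteq> {}"
proof
  assume "T = {}"
  \<comment> \<open>shifting every count up by one lets some bound reject it, even for \<open>\<le> N\<close>\<close>
  define e where "e = CSum Hole (Const {1})"
  obtain x where "x \<in> c" using assms(2) by blast
  obtain N where N: "\<not> count_sat op N (Suc x)" using count_sat_fails_above_0 by blast
  have "ctx_wf e" by (simp add: e_def)
  then have "verifies op N (ctx_eval e T) = verifies op N (ctx_eval e c)"
    using assms(1) unfolding sufficient_info_def by blast
  moreover have "Suc x \<in> ctx_eval e c"
    using \<open>x \<in> c\<close> by (force simp: e_def cross_sum_def)
  ultimately show False
    using \<open>T = {}\<close> N by (simp add: e_def cross_sum_def verifies_def)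
qed

lemma card_sufficient_info_CEq_ge_2:
  assumes "finite c" "2 \<le> card c" "T \<subseteq> c" "sufficient_info CEq c T"
  shows "2 \<le> card T"
proof -
  have "c \<noteq> {}" using assms(2) by auto
  then have "T \<noteq> {}" using assms(4) sufficient_info_nonempty by blast
  moreover have "T \<noteq> {x}" for x
  proof
    assume "T = {x}"
    have "verifies CEq x (ctx_eval Hole T) = verifies CEq x (ctx_eval Hole c)"
      using assms(4) ctx_wf.simps(1) unfolding sufficient_info_def by blast
    then have "c \<subseteq> {x}" using \<open>T = {x}\<close> by (simp add: verifies_CEq_iff)
    then have "card c \<le> 1" using card_mono[OF finite.intros(2)[OF finite.emptyI]] by fastforce
    then show False using assms(2) by simp
  qed
  moreover have "finite T" using assms(1,3) by (rule finite_subset[rotated])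
  ultimately have "card T \<noteq> 0" "card T \<noteq> 1"
    by (simp_all add: card_1_singleton_iff)
  then show ?thesis by linarith
qed

lemma minimal_info_singleton:
  assumes "finite c" "x \<in> c" "sufficient_info op c {x}"
  shows "minimal_info op c {x}"
  unfolding minimal_info_def
proof (intro conjI allI impI)
  fix T assume "T \<subseteq> c" "sufficient_info op c T"
  then have "T \<noteq> {}" and "finite T"
    using assms sufficient_info_nonempty finite_subset by blast+
  then show "card {x} \<le> card T" by (simp add: Suc_leI card_gt_0_iff)
qed (use assms in auto)

lemma minimal_info_CEq:
  assumes "finite c" "2 \<le> card c" "T \<subseteq> c" "card T = 2"
  shows "minimal_info CEq c T"
proof -
  have "\<nexists>k. T \<subseteq> {k}"
  proof
    assume "\<exists>k. T \<subseteq> {k}"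
    then obtain k where "T \<subseteq> {k}" ..
    then have "card T \<le> 1" using card_mono[of "{k}" T] by simp
    with assms(4) show False by simp
  qed
  then show ?thesis
    using assms by (simp add: minimal_info_def sufficient_info_CEq card_sufficient_info_CEq_ge_2)
qed

lemma smallest_subset: "finite c \<Longrightarrow> smallest k c \<subseteq> c"
  by (metis smallest_def set_sorted_list_of_set set_take_subset)

lemma card_smallest: "card (smallest k c) = min k (card c)"
  by (simp add: smallest_def distinct_card)

theorem proposition1:
  fixes c :: "nat set" and op :: count_op
  assumes "finite c" and "c \<noteq> {}"
  shows "(op \<in> {CGe, CGt} \<longrightarrow> minimal_info op c {Min c})
       \<and> (op \<in> {CLe, CLt} \<longrightarrow> minimal_info op c {Max c})
       \<and> (op = CEq \<longrightarrow> minimal_info op c (smallest (min (card c) 2) c))"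
proof (intro conjI impI)
  show "minimal_info op c {Min c}" if "op \<in> {CGe, CGt}"
    using assms that by (simp add: minimal_info_singleton sufficient_info_Min)
  show "minimal_info op c {Max c}" if "op \<in> {CLe, CLt}"
    using assms that by (simp add: minimal_info_singleton sufficient_info_Max)
  assume "op = CEq"
  define T where "T = smallest (min (card c) 2) c"
  have T_sub: "T \<subseteq> c" and card_T: "card T = min (card c) 2"
    using assms(1) by (simp_all add: T_def smallest_subset card_smallest)
  have "card c \<noteq> 0" using assms by simp
  then consider "card c = 1" | "2 \<le> card c" by linarith
  then show "minimal_info op c T"
  proof cases
    case 1
    then obtain x where "c = {x}" by (rule card_1_singletonE)
    moreover have "T = c" using 1 T_sub card_T assms(1) by (simp add: card_subset_eq)
    ultimately show ?thesis
      by (simp add: minimal_info_singleton sufficient_info_refl)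
  next
    case 2
    then show ?thesis
      using T_sub card_T assms(1) \<open>op = CEq\<close> by (simp add: minimal_info_CEq)
  qed
qed

end
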